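(* Let $V$ be a real vector space and $\mathcal R:V\to\mathbb R$ an $\eta$-proper regularizer for some $\eta\ge1$. Let $f_\star,h\in V$ with $\mathcal R(h-f_\star)=\rho$, where $\rho\ge5\eta\,\mathcal R(f_\star)$, let $\beta\ge1$ and $\hat f:=f_\star+\beta(h-f_\star)$. Then $$\mathcal R(\hat f)-\mathcal R(f_\star)\ge\frac{\beta}{2\eta^2}\big(\mathcal R(h)-\mathcal R(f_\star)\big).$$
   Context: A function $\mathcal R:V\to\mathbb R$ is an $\eta$-proper regularizer ($\eta\ge1$) if: (a) it is non-negative, even, convex, and $\mathcal R(0)=0$; (b) $\mathcal R(f+g)\le\eta(\mathcal R(f)+\mathcal R(g))$ for all $f,g\in V$; (c) $\mathcal R(af)\le a\,\mathcal R(f)$ for all $0\le a\le1$, and if $\eta=2$ moreover $\mathcal R(af)\le a^2\mathcal R(f)$. (For example $\mathcal R(f)=\|\mathcal Df\|^2$ for a linear operator $\mathcal D$ is $2$-proper.) *)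

theory Defs
  imports "HOL-Analysis.Analysis"
begin

definition proper_regularizer :: "real \<Rightarrow> ('a::real_vector \<Rightarrow> real) \<Rightarrow> bool" where
  "proper_regularizer \<eta> R \<longleftrightarrow>
     \<eta> \<ge> 1 \<and>
     (\<forall>f. R f \<ge> 0) \<and>
     (\<forall>f. R (- f) = R f) \<and>
     convex_on UNIV R \<and>
     R 0 = 0 \<and>
     (\<forall>f g. R (f + g) \<le> \<eta> * (R f + R g)) \<and>
     (\<forall>a f. 0 \<le> a \<and> a \<le> 1 \<longrightarrow> R (a *\<^sub>R f) \<le> a * R f) \<and>
     (\<eta> = 2 \<longrightarrow> (\<forall>a f. 0 \<le> a \<and> a \<le> 1 \<longrightarrow> R (a *\<^sub>R f) \<le> a\<^sup>2 * R f))"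

end

theory Submission
  imports Defs
begin

text \<open>The point \<open>h\<close> lies on the segment between \<open>f\<^sub>\<star>\<close> and \<open>f\<^sub>\<star> + \<beta>(h - f\<^sub>\<star>)\<close>, so
  convexity alone gives \<open>R(f\<^sub>\<star> + \<beta>(h - f\<^sub>\<star>)) - R f\<^sub>\<star> \<ge> \<beta> (R h - R f\<^sub>\<star>)\<close>. The separation
  hypothesis together with the quasi-triangle inequality forces \<open>R h \<ge> R f\<^sub>\<star>\<close>, so the right-hand
  side is non-negative and may be shrunk by the factor \<open>1/(2\<eta>\<^sup>2) \<le> 1\<close>.\<close>

lemma convex_on_extrapolate_ge:
  fixes f :: "'a::real_vector \<Rightarrow> real"
  assumes "convex_on S f" and "x \<in> S" and "x + \<beta> *\<^sub>R (y - x) \<in> S" and "\<beta> \<ge> 1"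
  shows "f (x + \<beta> *\<^sub>R (y - x)) - f x \<ge> \<beta> * (f y - f x)"
proof -
  define z where "z = x + \<beta> *\<^sub>R (y - x)"
  have y_between: "y = (1 - 1/\<beta>) *\<^sub>R x + (1/\<beta>) *\<^sub>R z"
    using assms(4) unfolding z_def by (simp add: algebra_simps)
  have "f y \<le> (1 - 1/\<beta>) * f x + (1/\<beta>) * f z"
    unfolding y_between using assms
    by (intro convex_onD[OF assms(1)]) (auto simp: z_def field_simps)
  then have "\<beta> * f y \<le> \<beta> * ((1 - 1/\<beta>) * f x + (1/\<beta>) * f z)"
    using assms(4) by (intro mult_left_mono) auto
  also have "\<dots> = (\<beta> - 1) * f x + f z"
    using assms(4) by (simp add: field_simps)
  finally show ?thesis
    unfolding z_def by (simp add: algebra_simps)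
qed

lemma proper_regularizer_diff_le:
  assumes "proper_regularizer \<eta> R"
  shows "R (h - f) \<le> \<eta> * (R h + R f)"
  using assms unfolding proper_regularizer_def
  by (metis diff_conv_add_uminus)

lemma proper_regularizer_le_if_far:
  assumes "proper_regularizer \<eta> R" and "2 * \<eta> * R f \<le> R (h - f)"
  shows "R f \<le> R h"
proof -
  have "\<eta> * (2 * R f) \<le> \<eta> * (R h + R f)"
    using assms(2) proper_regularizer_diff_le[OF assms(1), of h f] by simp
  moreover have "\<eta> > 0"
    using assms(1) unfolding proper_regularizer_def by simp
  ultimately show ?thesis
    by simp
qed

theorem mainTheorem10:
  fixes R :: "'a::real_vector \<Rightarrow> real" and \<eta> \<rho> \<beta> :: real and fstar h :: 'a
  assumes "proper_regularizer \<eta> R"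
    and "R (h - fstar) = \<rho>"
    and "\<rho> \<ge> 5 * \<eta> * R fstar"
    and "\<beta> \<ge> 1"
  shows "R (fstar + \<beta> *\<^sub>R (h - fstar)) - R fstar \<ge> \<beta> / (2 * \<eta>\<^sup>2) * (R h - R fstar)"
proof -
  have \<eta>: "\<eta> \<ge> 1" and "R fstar \<ge> 0" and "convex_on UNIV R"
    using assms(1) unfolding proper_regularizer_def by auto
  then have "\<eta> * R fstar \<ge> 0"
    by simp
  then have "2 * \<eta> * R fstar \<le> R (h - fstar)"
    using assms(2,3) by linarith
  then have "R h - R fstar \<ge> 0"
    using proper_regularizer_le_if_far[OF assms(1)] by simp
  moreover have "\<beta> / (2 * \<eta>\<^sup>2) \<le> \<beta>"
    using assms(4) one_le_power[OF \<eta>, of 2] by (simp add: divide_le_eq)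
  ultimately have "\<beta> / (2 * \<eta>\<^sup>2) * (R h - R fstar) \<le> \<beta> * (R h - R fstar)"
    by (intro mult_right_mono)
  also have "\<dots> \<le> R (fstar + \<beta> *\<^sub>R (h - fstar)) - R fstar"
    using convex_on_extrapolate_ge[OF \<open>convex_on UNIV R\<close>] assms(4) by simp
  finally show ?thesis .
qed

end
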